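(* Let $\Delta$ be a quasi-tree on $[n]$ of dimension $d-1$, and let $\ell$ be a nonnegative integer with $\ell\leq d-1$. Let $I\subset S=K[x_1,\ldots,x_n]$ ($K$ a field) be the ideal generated by all monomials $x_F=\prod_{i\in F}x_i$ where $F$ ranges over the $(\ell+1)$-element subsets of $[n]$ with $F\notin\Delta$ (the facet ideal of $\overline{\mathrm{skel}_\Delta(\ell)}$). Then $I$ has linear quotients. In particular, $I$ has a linear resolution.
   Context: A simplicial complex on $[n]$ is a collection of subsets of $[n]$ containing all singletons and closed under taking subsets; facets are maximal faces. A facet $F$ is a leaf if either it is the only facet, or there is a facet $G\neq F$ with $H\cap F\subseteq G\cap F$ for every facet $H\neq F$. $\Delta$ is a quasi-tree if its facets can be labeled $F_1,\ldots,F_m$ so that each $F_i$ is a leaf of the complex generated by $F_1,\ldots,F_i$. $\mathrm{skel}_\Delta(\ell)$ is the complex whose facets are the $\ell$-dimensional faces of $\Delta$; for a pure $(e-1)$-dimensional complex $\Gamma$, $\bar\Gamma$ is generated by the $e$-subsets of $[n]$ not in $\Gamma$. A monomial ideal $I$ has linear quotients if its minimal monomial generators can be ordered $f_1,\ldots,f_m$ such that for every $i>1$ the colon ideal $(f_1,\ldots,f_{i-1}):f_i$ is generated by variables. A graded ideal generated in degree $q$ has a linear resolution if the $i$-th module of its minimal graded free resolution is generated in degree $q+i$ for all $i$. *)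

theory Defs
  imports Main "HOL-Library.Poly_Mapping"
begin

definition simplicial_complex :: "nat \<Rightarrow> nat set set \<Rightarrow> bool" where
  "simplicial_complex n \<Delta> \<longleftrightarrow>
     \<Delta> \<subseteq> Pow {1..n} \<and> (\<forall>i\<in>{1..n}. {i} \<in> \<Delta>) \<and>
     (\<forall>F\<in>\<Delta>. \<forall>G. G \<subseteq> F \<longrightarrow> G \<in> \<Delta>)"

definition facets :: "nat set set \<Rightarrow> nat set set" where
  "facets \<Delta> = {F \<in> \<Delta>. \<forall>G\<in>\<Delta>. F \<subseteq> G \<longrightarrow> G = F}"

definition is_leaf :: "nat set set \<Rightarrow> nat set \<Rightarrow> bool" where
  "is_leaf \<Delta> F \<longleftrightarrow> F \<in> facets \<Delta> \<and>
     (facets \<Delta> = {F} \<or>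
      (\<exists>G\<in>facets \<Delta>. G \<noteq> F \<and> (\<forall>H\<in>facets \<Delta>. H \<noteq> F \<longrightarrow> H \<inter> F \<subseteq> G \<inter> F)))"

definition generated_complex :: "nat set set \<Rightarrow> nat set set" where
  "generated_complex \<F> = {G. \<exists>F\<in>\<F>. G \<subseteq> F}"

definition quasi_tree :: "nat \<Rightarrow> nat set set \<Rightarrow> bool" where
  "quasi_tree n \<Delta> \<longleftrightarrow> simplicial_complex n \<Delta> \<and>
     (\<exists>Fs. distinct Fs \<and> set Fs = facets \<Delta> \<and>
        (\<forall>i<length Fs. is_leaf (generated_complex (set (take (Suc i) Fs))) (Fs ! i)))"

text \<open>Polynomials in variables indexed by nat: finitely supported maps from monomials
  (exponent vectors) to coefficients. The ring S is the subring of
  polynomials only involving the variables x_1..x_n.\<close>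
type_synonym 'k mpoly = "(nat \<Rightarrow>\<^sub>0 nat) \<Rightarrow>\<^sub>0 'k"

definition polyring :: "nat \<Rightarrow> 'k::field mpoly set" where
  "polyring n = {p :: 'k mpoly. \<forall>m\<in>Poly_Mapping.keys p. Poly_Mapping.keys (m :: nat \<Rightarrow>\<^sub>0 nat) \<subseteq> {1..n}}"

definition mon :: "(nat \<Rightarrow>\<^sub>0 nat) \<Rightarrow> 'k::field mpoly" where
  "mon m = Poly_Mapping.single m 1"

definition var :: "nat \<Rightarrow> 'k::field mpoly" where
  "var i = mon (Poly_Mapping.single i 1)"

definition monom_of_set :: "nat set \<Rightarrow> 'k::field mpoly" where
  "monom_of_set F = (\<Prod>i\<in>F. var i)"

definition ideal_gen :: "nat \<Rightarrow> 'k::field mpoly set \<Rightarrow> 'k mpoly set" where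
  "ideal_gen n G = {(\<Sum>g\<in>T. r g * g) | T r. finite T \<and> T \<subseteq> G \<and> (\<forall>g\<in>T. r g \<in> polyring n)}"

definition colon :: "nat \<Rightarrow> 'k::field mpoly set \<Rightarrow> 'k mpoly \<Rightarrow> 'k mpoly set" where
  "colon n I f = {p \<in> polyring n. p * f \<in> I}"

definition generated_by_variables :: "nat \<Rightarrow> 'k::field mpoly set \<Rightarrow> bool" where
  "generated_by_variables n J \<longleftrightarrow> (\<exists>V \<subseteq> {1..n}. J = ideal_gen n (var ` V))"

definition monomials_in :: "nat \<Rightarrow> 'k::field mpoly set \<Rightarrow> (nat \<Rightarrow>\<^sub>0 nat) set" where
  "monomials_in n I = {m. Poly_Mapping.keys m \<subseteq> {1..n} \<and> (mon m :: 'k mpoly) \<in> I}"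

definition min_monomial_gens :: "nat \<Rightarrow> 'k::field mpoly set \<Rightarrow> 'k mpoly set" where
  "min_monomial_gens n I = mon ` {m \<in> monomials_in n I.
      \<forall>m'\<in>monomials_in n I. (\<forall>i. Poly_Mapping.lookup m' i \<le> Poly_Mapping.lookup m i) \<longrightarrow> m' = m}"

definition has_linear_quotients :: "nat \<Rightarrow> 'k::field mpoly set \<Rightarrow> bool" where
  "has_linear_quotients n I \<longleftrightarrow>
     (\<exists>fs. distinct fs \<and> set fs = min_monomial_gens n I \<and>
        (\<forall>i. 0 < i \<and> i < length fs \<longrightarrow>
           generated_by_variables n (colon n (ideal_gen n (set (take i fs))) (fs ! i))))"

end

theory Submission
  imports Defs "HOL-Library.Product_Lexorder"
begin

(* List the facets of the quasi-tree in a leaf order and rank each vertex by the first facet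
   containing it; the leaf property forces every face whose highest-ranked vertex is u into
   the facet where u first appears. Sort the (l+1)-element nonfaces by decreasing top vertex m,
   then by the number of vertices inside the facet of m, then by rank sum. For nonfaces B
   before A, exchanging a vertex of A for a suitable vertex v of B - A gives a nonface C
   before A with C - A = {v}. Hence the colon ideal of the earlier generators by x_A is
   generated by the variables x_v with C - A = {v} for some earlier C: each such x_v lies in
   it, and every earlier x_B / gcd(x_B, x_A) is divisible by one of them. *)

section \<open>Monomial ideals\<close>

definition monomial_dvd :: "(nat \<Rightarrow>\<^sub>0 nat) \<Rightarrow> (nat \<Rightarrow>\<^sub>0 nat) \<Rightarrow> bool" where
  "monomial_dvd g m \<longleftrightarrow> (\<forall>i. Poly_Mapping.lookup g i \<le> Poly_Mapping.lookup m i)"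

lemma monomial_dvd_add_self: "monomial_dvd g (m + g)"
  by (simp add: monomial_dvd_def lookup_add)

lemma monomial_dvd_diff_add: "monomial_dvd g m \<Longrightarrow> m - g + g = m"
  by (rule poly_mapping_eqI) (auto simp: monomial_dvd_def lookup_add lookup_minus)

lemma keys_diff_subset: "Poly_Mapping.keys ((m :: nat \<Rightarrow>\<^sub>0 nat) - g) \<subseteq> Poly_Mapping.keys m"
  by (auto simp: in_keys_iff lookup_minus)

lemma keys_add_subset_iff:
  "Poly_Mapping.keys ((f :: nat \<Rightarrow>\<^sub>0 nat) + g) \<subseteq> S \<longleftrightarrow>
     Poly_Mapping.keys f \<subseteq> S \<and> Poly_Mapping.keys g \<subseteq> S"
  using keys_add[of f g] by (auto simp: in_keys_iff lookup_add)

lemma sum_single_lookup: "(\<Sum>k\<in>Poly_Mapping.keys p. Poly_Mapping.single k (Poly_Mapping.lookup p k)) = p"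
  by (rule poly_mapping_eqI) (simp add: lookup_sum lookup_single when_def in_keys_iff)

lemma mult_mon_eq_sum:
  "(p :: 'k::field mpoly) * mon a = (\<Sum>m\<in>Poly_Mapping.keys p. Poly_Mapping.single (m + a) (Poly_Mapping.lookup p m))"
proof -
  have "p * mon a = (\<Sum>m\<in>Poly_Mapping.keys p. Poly_Mapping.single m (Poly_Mapping.lookup p m) * mon a)"
    by (subst (1) sum_single_lookup[symmetric]) (simp add: sum_distrib_right)
  then show ?thesis
    by (simp add: mon_def mult_single)
qed

lemma lookup_mult_mon_add: "Poly_Mapping.lookup ((p :: 'k::field mpoly) * mon a) (m + a) = Poly_Mapping.lookup p m"
  unfolding mult_mon_eq_sum by (simp add: lookup_sum lookup_single when_def in_keys_iff)

lemma keys_mult_mon: "Poly_Mapping.keys ((p :: 'k::field mpoly) * mon a) = (\<lambda>m. m + a) ` Poly_Mapping.keys p"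
proof
  show "Poly_Mapping.keys (p * mon a) \<subseteq> (\<lambda>m. m + a) ` Poly_Mapping.keys p"
    using keys_mult[of p "mon a"] by (auto simp: mon_def)
  show "(\<lambda>m. m + a) ` Poly_Mapping.keys p \<subseteq> Poly_Mapping.keys (p * mon a)"
    by (auto simp: in_keys_iff lookup_mult_mon_add)
qed

lemma keys_mon: "Poly_Mapping.keys (mon m :: 'k::field mpoly) = {m}"
  by (simp add: mon_def)

lemma single_in_polyring:
  "Poly_Mapping.keys a \<subseteq> {1..n} \<Longrightarrow> (Poly_Mapping.single a c :: 'k::field mpoly) \<in> polyring n"
  by (simp add: polyring_def)

lemma sum_in_polyring:
  "(\<And>i. i \<in> I \<Longrightarrow> f i \<in> polyring n) \<Longrightarrow> sum f I \<in> polyring n"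
  using keys_sum[of f I] by (fastforce simp: polyring_def)

lemma sum_mem_ideal_gen:
  assumes "finite M" and "\<And>m. m \<in> M \<Longrightarrow> g m \<in> G" and "\<And>m. m \<in> M \<Longrightarrow> c m \<in> polyring n"
  shows "(\<Sum>m\<in>M. c m * g m) \<in> ideal_gen n G"
proof -
  define r where "r t = (\<Sum>m\<in>{m \<in> M. g m = t}. c m)" for t
  have "(\<Sum>m\<in>M. c m * g m) = (\<Sum>t\<in>g ` M. \<Sum>m\<in>{m \<in> M. g m = t}. c m * g m)"
    by (rule sum.group[OF assms(1) finite_imageI[OF assms(1)] subset_refl, symmetric])
  also have "\<dots> = (\<Sum>t\<in>g ` M. r t * t)"
    by (auto simp: r_def sum_distrib_right intro!: sum.cong)
  moreover have "finite (g ` M)"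
    using assms(1) by simp
  ultimately show ?thesis
    using assms unfolding ideal_gen_def
    by (intro CollectI exI[of _ "g ` M"] exI[of _ r]) (auto simp: r_def intro!: sum_in_polyring)
qed

lemma keys_mem_ideal_gen_mon:
  assumes G: "\<forall>g\<in>Gs. Poly_Mapping.keys g \<subseteq> {1..n}"
    and p: "(p :: 'k::field mpoly) \<in> ideal_gen n (mon ` Gs)" and m: "m \<in> Poly_Mapping.keys p"
  shows "Poly_Mapping.keys m \<subseteq> {1..n} \<and> (\<exists>g\<in>Gs. monomial_dvd g m)"
proof -
  obtain T r where p_eq: "p = (\<Sum>t\<in>T. r t * t)" and T: "T \<subseteq> mon ` Gs"
    and r: "\<forall>t\<in>T. r t \<in> polyring n"
    using p unfolding ideal_gen_def by blast
  obtain t where t: "t \<in> T" and mt: "m \<in> Poly_Mapping.keys (r t * t)"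
    using keys_sum[of "\<lambda>t. r t * t" T] m p_eq by blast
  obtain g where g: "g \<in> Gs" "t = mon g"
    using t T by blast
  obtain a where a: "a \<in> Poly_Mapping.keys (r t)" "m = a + g"
    using mt g(2) keys_mult_mon by blast
  have "Poly_Mapping.keys a \<subseteq> {1..n}"
    using r t a(1) by (auto simp: polyring_def)
  then show ?thesis
    using a(2) g(1) G monomial_dvd_add_self keys_add_subset_iff by metis
qed

lemma ideal_gen_mon_iff:
  assumes G: "\<forall>g\<in>Gs. Poly_Mapping.keys g \<subseteq> {1..n}"
  shows "(p :: 'k::field mpoly) \<in> ideal_gen n (mon ` Gs) \<longleftrightarrow>
         p \<in> polyring n \<and> (\<forall>m\<in>Poly_Mapping.keys p. \<exists>g\<in>Gs. monomial_dvd g m)"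
proof
  assume "p \<in> ideal_gen n (mon ` Gs)"
  then show "p \<in> polyring n \<and> (\<forall>m\<in>Poly_Mapping.keys p. \<exists>g\<in>Gs. monomial_dvd g m)"
    using keys_mem_ideal_gen_mon[OF G] by (auto simp: polyring_def)
next
  assume p: "p \<in> polyring n \<and> (\<forall>m\<in>Poly_Mapping.keys p. \<exists>g\<in>Gs. monomial_dvd g m)"
  then obtain g where g: "\<And>m. m \<in> Poly_Mapping.keys p \<Longrightarrow> g m \<in> Gs \<and> monomial_dvd (g m) m"
    by metis
  have "p = (\<Sum>m\<in>Poly_Mapping.keys p. Poly_Mapping.single m (Poly_Mapping.lookup p m))"
    by (rule sum_single_lookup[symmetric])
  also have "\<dots> = (\<Sum>m\<in>Poly_Mapping.keys p.
      Poly_Mapping.single (m - g m) (Poly_Mapping.lookup p m) * mon (g m))"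
    using g monomial_dvd_diff_add by (auto simp: mon_def mult_single intro!: sum.cong)
  also have "\<dots> \<in> ideal_gen n (mon ` Gs)"
  proof (intro sum_mem_ideal_gen single_in_polyring)
    fix m assume "m \<in> Poly_Mapping.keys p"
    then show "mon (g m) \<in> mon ` Gs" and "Poly_Mapping.keys (m - g m) \<subseteq> {1..n}"
      using p g keys_diff_subset[of m "g m"] by (auto simp: polyring_def)
  qed simp
  finally show "p \<in> ideal_gen n (mon ` Gs)" .
qed

lemma colon_ideal_gen_mon:
  assumes G: "\<forall>g\<in>Gs. Poly_Mapping.keys g \<subseteq> {1..n}"
    and a: "Poly_Mapping.keys a \<subseteq> {1..n}"
    and V: "V \<subseteq> {1..n}"
    and dvd_iff: "\<And>m. Poly_Mapping.keys m \<subseteq> {1..n} \<Longrightarrow>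
      (\<exists>g\<in>Gs. monomial_dvd g (m + a)) \<longleftrightarrow> (\<exists>v\<in>V. 1 \<le> Poly_Mapping.lookup m v)"
  shows "colon n (ideal_gen n (mon ` Gs)) (mon a :: 'k::field mpoly) = ideal_gen n (var ` V)"
proof (rule set_eqI)
  fix p :: "'k mpoly"
  have var_eq: "var ` V = (mon ` (\<lambda>v. Poly_Mapping.single v 1) ` V :: 'k mpoly set)"
    by (auto simp: var_def)
  have V': "\<forall>g\<in>(\<lambda>v. Poly_Mapping.single v 1) ` V. Poly_Mapping.keys g \<subseteq> {1..n}"
    using V by auto
  have "p \<in> polyring n \<Longrightarrow> p * mon a \<in> polyring n"
    using a by (auto simp: polyring_def keys_mult_mon keys_add_subset_iff)
  then have "p \<in> colon n (ideal_gen n (mon ` Gs)) (mon a) \<longleftrightarrow>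
      p \<in> polyring n \<and> (\<forall>m\<in>Poly_Mapping.keys p. \<exists>g\<in>Gs. monomial_dvd g (m + a))"
    unfolding colon_def ideal_gen_mon_iff[OF G] by (auto simp: keys_mult_mon)
  also have "\<dots> \<longleftrightarrow> p \<in> polyring n \<and>
      (\<forall>m\<in>Poly_Mapping.keys p. \<exists>v\<in>V. monomial_dvd (Poly_Mapping.single v 1) m)"
    using dvd_iff by (auto simp: polyring_def monomial_dvd_def lookup_single when_def)
  also have "\<dots> \<longleftrightarrow> p \<in> ideal_gen n (var ` V)"
    unfolding var_eq ideal_gen_mon_iff[OF V'] by blast
  finally show "p \<in> colon n (ideal_gen n (mon ` Gs)) (mon a) \<longleftrightarrow> p \<in> ideal_gen n (var ` V)" .
qed

section \<open>Squarefree monomial ideals with linear quotients\<close>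

definition sqfree_exponent :: "nat set \<Rightarrow> (nat \<Rightarrow>\<^sub>0 nat)" where
  "sqfree_exponent A = (\<Sum>i\<in>A. Poly_Mapping.single i 1)"

lemma lookup_sqfree_exponent:
  "finite A \<Longrightarrow> Poly_Mapping.lookup (sqfree_exponent A) i = (if i \<in> A then 1 else 0)"
  unfolding sqfree_exponent_def
  by (induction A rule: finite_induct) (auto simp: lookup_add lookup_single when_def)

lemma keys_sqfree_exponent: "finite A \<Longrightarrow> Poly_Mapping.keys (sqfree_exponent A) = A"
  by (auto simp: in_keys_iff lookup_sqfree_exponent split: if_splits)

lemma monom_of_set_eq_mon: "finite F \<Longrightarrow> (monom_of_set F :: 'k::field mpoly) = mon (sqfree_exponent F)"
proof (induction F rule: finite_induct)
  case empty
  then show ?case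
    by (simp add: monom_of_set_def sqfree_exponent_def mon_def one_poly_mapping.abs_eq single.abs_eq)
next
  case (insert x F)
  then show ?case
    by (simp add: monom_of_set_def sqfree_exponent_def var_def mon_def mult_single)
qed

lemma monom_of_set_eq_iff:
  "finite A \<Longrightarrow> finite B \<Longrightarrow> (monom_of_set A :: 'k::field mpoly) = monom_of_set B \<longleftrightarrow> A = B"
proof
  assume "finite A" "finite B" "(monom_of_set A :: 'k mpoly) = monom_of_set B"
  then have "Poly_Mapping.keys (mon (sqfree_exponent A) :: 'k mpoly) = Poly_Mapping.keys (mon (sqfree_exponent B) :: 'k mpoly)"
    by (simp add: monom_of_set_eq_mon)
  then have "sqfree_exponent A = sqfree_exponent B"
    by (simp add: keys_mon)
  with \<open>finite A\<close> \<open>finite B\<close> show "A = B"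
    by (metis keys_sqfree_exponent)
qed simp

lemma monomial_dvd_sqfree_exponent:
  "finite B \<Longrightarrow> monomial_dvd (sqfree_exponent B) m \<longleftrightarrow> (\<forall>x\<in>B. 1 \<le> Poly_Mapping.lookup m x)"
  by (auto simp: monomial_dvd_def lookup_sqfree_exponent)

lemma monomial_dvd_add_sqfree_exponent:
  assumes "finite A" "finite B"
  shows "monomial_dvd (sqfree_exponent B) (m + sqfree_exponent A) \<longleftrightarrow>
    (\<forall>x\<in>B - A. 1 \<le> Poly_Mapping.lookup m x)"
  using assms by (auto simp: monomial_dvd_sqfree_exponent lookup_add lookup_sqfree_exponent)

lemma eq_if_between_sqfree_exponents:
  assumes "finite A" "finite B" "card B = card A"
    and B_dvd: "monomial_dvd (sqfree_exponent B) m" and dvd_A: "monomial_dvd m (sqfree_exponent A)"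
  shows "m = sqfree_exponent A"
proof -
  have "B \<subseteq> A"
  proof
    fix x assume "x \<in> B"
    then have "1 \<le> Poly_Mapping.lookup m x"
      using B_dvd monomial_dvd_sqfree_exponent[OF assms(2)] by blast
    also have "\<dots> \<le> Poly_Mapping.lookup (sqfree_exponent A) x"
      using dvd_A by (simp add: monomial_dvd_def)
    finally show "x \<in> A"
      using assms(1) by (simp add: lookup_sqfree_exponent split: if_splits)
  qed
  then have "B = A"
    using card_subset_eq[OF assms(1) _ assms(3)] by blast
  then show ?thesis
    using B_dvd dvd_A by (auto simp: monomial_dvd_def intro!: poly_mapping_eqI order_antisym)
qed

lemma min_monomial_gens_sqfree:
  assumes N: "\<forall>A\<in>N. A \<subseteq> {1..n} \<and> card A = e"
  shows "min_monomial_gens n (ideal_gen n (monom_of_set ` N)) = (monom_of_set ` N :: 'k::field mpoly set)"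
proof -
  have fin: "\<And>A. A \<in> N \<Longrightarrow> finite A"
    using N finite_subset by blast
  have gens: "(monom_of_set ` N :: 'k mpoly set) = mon ` sqfree_exponent ` N"
    using fin by (force simp: monom_of_set_eq_mon)
  have G: "\<forall>g\<in>sqfree_exponent ` N. Poly_Mapping.keys g \<subseteq> {1..n}"
    using N fin by (auto simp: keys_sqfree_exponent)
  define M where "M = monomials_in n (ideal_gen n (monom_of_set ` N) :: 'k mpoly set)"
  have M_eq: "M = {m. Poly_Mapping.keys m \<subseteq> {1..n} \<and> (\<exists>A\<in>N. monomial_dvd (sqfree_exponent A) m)}"
    unfolding M_def monomials_in_def gens ideal_gen_mon_iff[OF G]
    by (auto simp: polyring_def keys_mon)
  have sq_in_M: "sqfree_exponent A \<in> M" if "A \<in> N" for A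
    using that G by (auto simp: M_eq monomial_dvd_def)
  have minimal: "m' = sqfree_exponent A"
    if A: "A \<in> N" and m': "m' \<in> M" and le: "\<forall>i. Poly_Mapping.lookup m' i \<le> Poly_Mapping.lookup (sqfree_exponent A) i"
    for A m'
  proof -
    obtain B where B: "B \<in> N" "monomial_dvd (sqfree_exponent B) m'"
      using m' by (auto simp: M_eq)
    then show ?thesis
      using eq_if_between_sqfree_exponents[OF fin[OF A] fin[OF B(1)] _ B(2)] le N A
      by (simp add: monomial_dvd_def)
  qed
  have "{m \<in> M. \<forall>m'\<in>M. (\<forall>i. Poly_Mapping.lookup m' i \<le> Poly_Mapping.lookup m i) \<longrightarrow> m' = m}
      = sqfree_exponent ` N"
  proof (intro equalityI subsetI)
    fix m assume m: "m \<in> {m \<in> M. \<forall>m'\<in>M. (\<forall>i. Poly_Mapping.lookup m' i \<le> Poly_Mapping.lookup m i) \<longrightarrow> m' = m}"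
    then obtain A where "A \<in> N" "monomial_dvd (sqfree_exponent A) m"
      by (auto simp: M_eq)
    then show "m \<in> sqfree_exponent ` N"
      using m sq_in_M by (auto simp: monomial_dvd_def)
  qed (use sq_in_M minimal in auto)
  then show ?thesis
    unfolding min_monomial_gens_def M_def gens by simp
qed

definition linear_quotient_order :: "'a set list \<Rightarrow> bool" where
  "linear_quotient_order As \<longleftrightarrow>
     (\<forall>i<length As. \<forall>j<i. \<exists>k<i. \<exists>v\<in>As ! j. As ! k - As ! i = {v})"

lemma linear_quotient_order_earlier_diff_iff:
  assumes "linear_quotient_order As" "i < length As"
  shows "(\<exists>j<i. \<forall>x\<in>As ! j - As ! i. P x) \<longleftrightarrow> (\<exists>k<i. \<exists>v. As ! k - As ! i = {v} \<and> P v)"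
proof
  assume "\<exists>j<i. \<forall>x\<in>As ! j - As ! i. P x"
  then obtain j where j: "j < i" "\<forall>x\<in>As ! j - As ! i. P x"
    by blast
  obtain k v where "k < i" "v \<in> As ! j" "As ! k - As ! i = {v}"
    using assms j(1) unfolding linear_quotient_order_def by blast
  then show "\<exists>k<i. \<exists>v. As ! k - As ! i = {v} \<and> P v"
    using j(2) by blast
next
  assume "\<exists>k<i. \<exists>v. As ! k - As ! i = {v} \<and> P v"
  then obtain k v where "k < i" "As ! k - As ! i = {v}" "P v"
    by blast
  then show "\<exists>j<i. \<forall>x\<in>As ! j - As ! i. P x"
    by (intro exI[of _ k]) simp
qed

lemma colon_linear_quotient_order:
  assumes As: "\<forall>A\<in>set As. A \<subseteq> {1..n}" and lqo: "linear_quotient_order As" and i: "i < length As"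
  shows "generated_by_variables n
    (colon n (ideal_gen n (monom_of_set ` set (take i As))) (monom_of_set (As ! i) :: 'k::field mpoly))"
proof -
  define V where "V = {v. \<exists>k<i. As ! k - As ! i = {v}}"
  have sub: "As ! k \<subseteq> {1..n}" if "k < length As" for k
    using As nth_mem[OF that] by blast
  then have fin: "finite (As ! k)" if "k < length As" for k
    using that finite_subset by blast
  have take_eq: "set (take i As) = (\<lambda>k. As ! k) ` {..<i}"
    using nth_image[of i As] i by (simp add: lessThan_atLeast0)
  have gens: "(monom_of_set ` set (take i As) :: 'k mpoly set) = mon ` sqfree_exponent ` set (take i As)"
    unfolding take_eq image_image using fin i by (intro image_cong refl) (simp add: monom_of_set_eq_mon)
  have G: "\<forall>g\<in>sqfree_exponent ` set (take i As). Poly_Mapping.keys g \<subseteq> {1..n}"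
    using sub fin i by (auto simp: take_eq keys_sqfree_exponent)
  have a: "Poly_Mapping.keys (sqfree_exponent (As ! i)) \<subseteq> {1..n}"
    using sub fin i by (simp add: keys_sqfree_exponent)
  have V: "V \<subseteq> {1..n}"
  proof
    fix v assume "v \<in> V"
    then obtain k where "k < i" "As ! k - As ! i = {v}"
      by (auto simp: V_def)
    then show "v \<in> {1..n}"
      using sub[of k] i by auto
  qed
  have dvd_iff: "(\<exists>g\<in>sqfree_exponent ` set (take i As). monomial_dvd g (m + sqfree_exponent (As ! i)))
      \<longleftrightarrow> (\<exists>v\<in>V. 1 \<le> Poly_Mapping.lookup m v)" for m
  proof -
    have "monomial_dvd (sqfree_exponent (As ! j)) (m + sqfree_exponent (As ! i))
        \<longleftrightarrow> (\<forall>x\<in>As ! j - As ! i. 1 \<le> Poly_Mapping.lookup m x)" if "j < i" for j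
      using fin i that by (simp add: monomial_dvd_add_sqfree_exponent)
    then have "(\<exists>g\<in>sqfree_exponent ` set (take i As). monomial_dvd g (m + sqfree_exponent (As ! i)))
        \<longleftrightarrow> (\<exists>j<i. \<forall>x\<in>As ! j - As ! i. 1 \<le> Poly_Mapping.lookup m x)"
      unfolding take_eq by (simp add: image_image Bex_def)
    also have "\<dots> \<longleftrightarrow> (\<exists>v\<in>V. 1 \<le> Poly_Mapping.lookup m v)"
      unfolding linear_quotient_order_earlier_diff_iff[OF lqo i] V_def by blast
    finally show ?thesis .
  qed
  show ?thesis
    unfolding generated_by_variables_def gens monom_of_set_eq_mon[OF fin[OF i]]
    using colon_ideal_gen_mon[OF G a V dvd_iff] V by blast
qed

lemma has_linear_quotients_if_linear_quotient_order:
  assumes "distinct As" and As: "\<forall>A\<in>set As. A \<subseteq> {1..n} \<and> card A = e"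
    and lqo: "linear_quotient_order As"
  shows "has_linear_quotients n (ideal_gen n (monom_of_set ` set As) :: 'k::field mpoly set)"
proof -
  define fs where "fs = map (monom_of_set :: nat set \<Rightarrow> 'k mpoly) As"
  have "finite A" if "A \<in> set As" for A
    using As that finite_subset by blast
  then have "inj_on (monom_of_set :: nat set \<Rightarrow> 'k mpoly) (set As)"
    by (intro inj_onI) (simp add: monom_of_set_eq_iff)
  then have "distinct fs"
    using \<open>distinct As\<close> by (simp add: fs_def distinct_map)
  moreover have "set fs = min_monomial_gens n (ideal_gen n (monom_of_set ` set As))"
    using min_monomial_gens_sqfree[OF As, where 'k='k] by (simp add: fs_def)
  moreover have "generated_by_variables n (colon n (ideal_gen n (set (take i fs))) (fs ! i))"
    if "i < length fs" for i
  proof -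
    have "set (take i fs) = monom_of_set ` set (take i As)" and "fs ! i = monom_of_set (As ! i)"
      using that by (simp_all add: fs_def take_map)
    moreover have "\<forall>A\<in>set As. A \<subseteq> {1..n}"
      using As by blast
    ultimately show ?thesis
      using colon_linear_quotient_order[OF _ lqo, of n i, where 'k='k] that by (simp add: fs_def)
  qed
  ultimately show ?thesis
    unfolding has_linear_quotients_def by blast
qed

section \<open>Exchange orders of nonfaces\<close>

lemma linear_quotient_order_sort_key:
  fixes key :: "'a set \<Rightarrow> 'b::linorder"
  assumes "finite N"
    and exchange: "\<And>A B. A \<in> N \<Longrightarrow> B \<in> N \<Longrightarrow> A \<noteq> B \<Longrightarrow> key B \<le> key A \<Longrightarrow>
      \<exists>C\<in>N. key C < key A \<and> (\<exists>v\<in>B. C - A = {v})"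
  shows "\<exists>As. distinct As \<and> set As = N \<and> linear_quotient_order As"
proof -
  obtain xs where xs: "set xs = N" "distinct xs"
    using finite_distinct_list[OF \<open>finite N\<close>] by blast
  define As where "As = sort_key key xs"
  have As: "distinct As" "set As = N"
    using xs by (auto simp: As_def)
  have "sorted (map key As)"
    by (simp add: As_def)
  then have mono: "key (As ! j) \<le> key (As ! i)" if "j \<le> i" "i < length As" for i j
    using sorted_nth_mono[of "map key As" j i] that by simp
  have "\<exists>k<i. \<exists>v\<in>As ! j. As ! k - As ! i = {v}" if i: "i < length As" and j: "j < i" for i j
  proof -
    have "As ! i \<in> N" "As ! j \<in> N"
      using nth_mem[OF i] nth_mem[of j As] i j As(2) by simp_all
    moreover have "As ! i \<noteq> As ! j"
      using As(1) i j by (simp add: nth_eq_iff_index_eq)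
    moreover have "key (As ! j) \<le> key (As ! i)"
      using mono[OF less_imp_le[OF j] i] .
    ultimately obtain C where C: "C \<in> N" "key C < key (As ! i)" "\<exists>v\<in>As ! j. C - As ! i = {v}"
      using exchange[of "As ! i" "As ! j"] by blast
    obtain k where k: "k < length As" "As ! k = C"
      using C(1) As(2) by (auto simp: in_set_conv_nth)
    have "k < i"
    proof (rule ccontr)
      assume "\<not> k < i"
      then have "key (As ! i) \<le> key C"
        using mono[of i k] k by simp
      then show False
        using C(2) by simp
    qed
    then show ?thesis
      using C(3) k(2) by blast
  qed
  then show ?thesis
    using As unfolding linear_quotient_order_def by (intro exI[of _ As]) simp
qed

lemma exists_lighter_exchange:
  fixes f :: "'a \<Rightarrow> nat"
  assumes "finite A" "finite B" "card A = card B" "A \<noteq> B"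
    and inj: "inj_on f (A \<union> B)" and le: "sum f B \<le> sum f A"
  shows "\<exists>u\<in>B - A. \<exists>w\<in>A - B. f u < f w"
proof (rule ccontr)
  assume no_swap: "\<not> ?thesis"
  have less: "f w < f u" if "u \<in> B - A" "w \<in> A - B" for u w
  proof -
    have "f u \<noteq> f w"
      using that inj_on_eq_iff[OF inj, of u w] by auto
    moreover have "\<not> f u < f w"
      using no_swap that by auto
    ultimately show ?thesis
      by simp
  qed
  have "card (A - B) = card (B - A)"
    using card_Int_Diff[OF assms(1), of B] card_Int_Diff[OF assms(2), of A] assms(3)
    by (simp add: Int_commute)
  then obtain h where h: "bij_betw h (A - B) (B - A)"
    using finite_same_card_bij[OF finite_Diff[OF assms(1)] finite_Diff[OF assms(2)]] by blast
  have "A - B \<noteq> {}"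
  proof
    assume "A - B = {}"
    then have "A \<subseteq> B"
      by simp
    then show False
      using card_subset_eq[OF assms(2) _ assms(3)] assms(4) by simp
  qed
  moreover have "f w < f (h w)" if "w \<in> A - B" for w
    using less[OF bij_betw_apply[OF h that] that] .
  ultimately have "sum f (A - B) < (\<Sum>w\<in>A - B. f (h w))"
    by (rule sum_strict_mono[OF finite_Diff[OF assms(1)]])
  also have "\<dots> = sum f (B - A)"
    using h by (rule sum.reindex_bij_betw)
  finally have "sum f (A - B) < sum f (B - A)" .
  moreover have "sum f A = sum f (A \<inter> B) + sum f (A - B)" "sum f B = sum f (A \<inter> B) + sum f (B - A)"
    using sum.Int_Diff[OF assms(1), of f B] sum.Int_Diff[OF assms(2), of f A] by (simp_all add: Int_commute)
  ultimately show False
    using le by simp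
qed

lemma sum_swap:
  assumes "finite A" "w \<in> A" "u \<notin> A"
  shows "sum f (insert u (A - {w})) + f w = sum f A + f u"
  using assms by (simp add: sum.remove[OF assms(1,2)] add_ac)

definition nonfaces :: "'a set \<Rightarrow> 'a set set \<Rightarrow> nat \<Rightarrow> 'a set set" where
  "nonfaces V \<Delta> e = {A. A \<subseteq> V \<and> card A = e \<and> A \<notin> \<Delta>}"

(* What a leaf order of the facets provides: rank orders the vertices by the first facet
   containing them, and facet_of u is that facet. *)
locale ranked_complex =
  fixes V :: "'a set" and \<Delta> :: "'a set set" and rank :: "'a \<Rightarrow> nat" and facet_of :: "'a \<Rightarrow> 'a set"
  assumes finite_V: "finite V"
    and subset_face: "F \<in> \<Delta> \<Longrightarrow> G \<subseteq> F \<Longrightarrow> G \<in> \<Delta>"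
    and inj_rank: "inj_on rank V"
    and facet_of_face: "u \<in> V \<Longrightarrow> facet_of u \<in> \<Delta>"
    and mem_facet_of: "u \<in> V \<Longrightarrow> u \<in> facet_of u"
    and face_subset_facet_of:
      "u \<in> V \<Longrightarrow> C \<in> \<Delta> \<Longrightarrow> C \<subseteq> V \<Longrightarrow> u \<in> C \<Longrightarrow> \<forall>x\<in>C. rank x \<le> rank u \<Longrightarrow> C \<subseteq> facet_of u"
begin

definition top_vertex :: "'a set \<Rightarrow> 'a" where
  "top_vertex A = arg_max_on rank A"

lemma top_vertex:
  assumes "A \<subseteq> V" "A \<noteq> {}"
  shows "top_vertex A \<in> A" and "\<And>y. y \<in> A \<Longrightarrow> rank y \<le> rank (top_vertex A)"
proof -
  obtain x where "x \<in> A"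
    using assms(2) by blast
  moreover have "\<forall>y. y \<in> A \<longrightarrow> rank y < Suc (Max (rank ` A))"
    using finite_subset[OF assms(1) finite_V] by (simp add: le_imp_less_Suc)
  ultimately show "top_vertex A \<in> A" and "\<And>y. y \<in> A \<Longrightarrow> rank y \<le> rank (top_vertex A)"
    using arg_max_nat_lemma[of "\<lambda>x. x \<in> A" x rank] by (simp_all add: top_vertex_def arg_max_on_def)
qed

lemma top_vertex_eqI:
  assumes "A \<subseteq> V" "x \<in> A" "\<And>y. y \<in> A \<Longrightarrow> rank y \<le> rank x"
  shows "top_vertex A = x"
proof -
  have A: "A \<noteq> {}"
    using assms(2) by blast
  have "rank (top_vertex A) = rank x"
    using top_vertex[OF assms(1) A] assms(2,3) by (simp add: le_antisym)
  then show ?thesis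
    using inj_onD[OF inj_rank] top_vertex(1)[OF assms(1) A] assms(1,2) by blast
qed

lemma not_face_if_outside_facet_of_top_vertex:
  assumes "C \<subseteq> V" "y \<in> C" "y \<notin> facet_of (top_vertex C)"
  shows "C \<notin> \<Delta>"
proof
  assume "C \<in> \<Delta>"
  moreover have "C \<noteq> {}"
    using assms(2) by blast
  ultimately have "C \<subseteq> facet_of (top_vertex C)"
    using face_subset_facet_of top_vertex assms(1) by blast
  then show False
    using assms(2,3) by blast
qed

lemma nonface_has_two_vertices:
  assumes "A \<subseteq> V" "A \<notin> \<Delta>" "x \<in> A"
  obtains w where "w \<in> A" "w \<noteq> x"
proof -
  have "x \<in> V"
    using assms by blast
  then have "\<not> A \<subseteq> {x}"
    using assms(2) subset_face[OF facet_of_face, of x A] mem_facet_of[of x] by blast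
  then show ?thesis
    using that by blast
qed

lemma swap_mem_nonfaces:
  assumes "A \<in> nonfaces V \<Delta> e" "u \<in> V" "u \<notin> A" "w \<in> A" "insert u (A - {w}) \<notin> \<Delta>"
  shows "insert u (A - {w}) \<in> nonfaces V \<Delta> e"
proof -
  have "finite A"
    using assms(1) finite_V finite_subset by (auto simp: nonfaces_def)
  then have "card (insert u (A - {w})) = card A"
    using assms(3,4) card_gt_0_iff[of A] by (auto simp: card_insert_if)
  then show ?thesis
    using assms by (auto simp: nonfaces_def)
qed

definition weight :: "'a set \<Rightarrow> 'a \<Rightarrow> nat" where
  "weight F x = rank x + (if x \<in> F then Suc (Max (rank ` V)) else 0)"

lemma weight_less_if_mem:
  assumes "x \<in> V" "x \<notin> F" "y \<in> F"
  shows "weight F x < weight F y"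
proof -
  have "rank x \<le> Max (rank ` V)"
    using assms(1) finite_V by simp
  then show ?thesis
    using assms(2,3) by (simp add: weight_def)
qed

lemma inj_on_weight: "inj_on (weight F) V"
proof (rule inj_onI)
  fix x y assume xy: "x \<in> V" "y \<in> V" "weight F x = weight F y"
  then have "x \<in> F \<longleftrightarrow> y \<in> F"
    using weight_less_if_mem by (metis less_irrefl)
  then have "rank x = rank y"
    using xy(3) by (simp add: weight_def split: if_splits)
  then show "x = y"
    using inj_onD[OF inj_rank] xy(1,2) by blast
qed

(* Nonfaces are sorted by decreasing top vertex m, then by the number of vertices in
   facet_of m, then by rank sum; the bonus in weight lets one sum encode the last two. *)
definition key :: "'a set \<Rightarrow> int \<times> nat" where
  "key A = (- int (rank (top_vertex A)), sum (weight (facet_of (top_vertex A))) A)"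

lemma exchange_raising_top_vertex:
  assumes A: "A \<in> nonfaces V \<Delta> e" "A \<noteq> {}" and B: "B \<in> nonfaces V \<Delta> e" "B \<noteq> {}"
    and less: "rank (top_vertex A) < rank (top_vertex B)"
  shows "\<exists>C\<in>nonfaces V \<Delta> e. key C < key A \<and> (\<exists>v\<in>B. C - A = {v})"
proof -
  have AV: "A \<subseteq> V" "A \<notin> \<Delta>" and BV: "B \<subseteq> V"
    using A B by (auto simp: nonfaces_def)
  define u where "u = top_vertex B"
  have u: "u \<in> B" "u \<in> V"
    using top_vertex(1)[OF BV B(2)] BV by (auto simp: u_def)
  have below_u: "rank y < rank u" if "y \<in> A" for y
    using top_vertex(2)[OF AV(1) A(2) that] less by (simp add: u_def)
  then have "u \<notin> A"
    by blast
  obtain x where x: "x \<in> A" "x \<notin> facet_of u"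
    using AV(2) subset_face[OF facet_of_face[OF u(2)]] by blast
  obtain w where w: "w \<in> A" "w \<noteq> x"
    using nonface_has_two_vertices[OF AV x(1)] .
  define C where "C = insert u (A - {w})"
  have CV: "C \<subseteq> V"
    using AV(1) u(2) by (auto simp: C_def)
  have top_C: "top_vertex C = u"
    using CV below_u by (intro top_vertex_eqI) (auto simp: C_def less_imp_le)
  have "C \<notin> \<Delta>"
    using not_face_if_outside_facet_of_top_vertex[OF CV, of x] x w top_C by (simp add: C_def)
  then have "C \<in> nonfaces V \<Delta> e"
    unfolding C_def using swap_mem_nonfaces[OF A(1) u(2) \<open>u \<notin> A\<close> w(1)] by blast
  moreover have "key C < key A"
    using top_C below_u[OF top_vertex(1)[OF AV(1) A(2)]] by (simp add: key_def)
  moreover have "C - A = {u}"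
    using \<open>u \<notin> A\<close> by (auto simp: C_def)
  ultimately show ?thesis
    using u(1) by blast
qed

lemma exchange_same_top_vertex:
  assumes A: "A \<in> nonfaces V \<Delta> e" "A \<noteq> {}" and B: "B \<in> nonfaces V \<Delta> e" "B \<noteq> {}" and "A \<noteq> B"
    and top: "top_vertex B = top_vertex A"
    and le: "sum (weight (facet_of (top_vertex A))) B \<le> sum (weight (facet_of (top_vertex A))) A"
  shows "\<exists>C\<in>nonfaces V \<Delta> e. key C < key A \<and> (\<exists>v\<in>B. C - A = {v})"
proof -
  have AV: "A \<subseteq> V" "A \<notin> \<Delta>" "finite A" and BV: "B \<subseteq> V" "finite B"
    using A B finite_V finite_subset by (auto simp: nonfaces_def)
  define m where "m = top_vertex A"
  define F where "F = facet_of m"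
  have m: "m \<in> A" "m \<in> B" "m \<in> V"
    using top_vertex(1)[OF AV(1) A(2)] top_vertex(1)[OF BV(1) B(2)] AV(1) top by (auto simp: m_def)
  have below_m: "rank y \<le> rank m" if "y \<in> A \<union> B" for y
    using that top_vertex(2)[OF AV(1) A(2)] top_vertex(2)[OF BV(1) B(2)] top by (auto simp: m_def)
  have "card A = card B"
    using A B by (simp add: nonfaces_def)
  moreover have "inj_on (weight F) (A \<union> B)"
    using inj_on_subset[OF inj_on_weight] AV(1) BV(1) by blast
  moreover have "sum (weight F) B \<le> sum (weight F) A"
    using le by (simp add: F_def m_def)
  ultimately obtain u w where u: "u \<in> B - A" and w: "w \<in> A - B" and uw: "weight F u < weight F w"
    using exists_lighter_exchange[OF AV(3) BV(2) _ \<open>A \<noteq> B\<close>] by blast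
  define C where "C = insert u (A - {w})"
  have CV: "C \<subseteq> V"
    using AV(1) BV(1) u by (auto simp: C_def)
  have top_C: "top_vertex C = m"
    using CV m w below_m u by (intro top_vertex_eqI) (auto simp: C_def)
  obtain x where x: "x \<in> A" "x \<notin> F"
    using AV(2) subset_face[OF facet_of_face[OF m(3)]] by (auto simp: F_def)
  have "\<exists>y\<in>C. y \<notin> F"
  proof (cases "x = w")
    case True
    then have "u \<notin> F"
      using weight_less_if_mem[of w F u] AV(1) x uw by auto
    then show ?thesis
      by (auto simp: C_def)
  next
    case False
    then show ?thesis
      using x by (auto simp: C_def)
  qed
  then have "C \<notin> \<Delta>"
    using not_face_if_outside_facet_of_top_vertex[OF CV] top_C by (auto simp: F_def)
  then have "C \<in> nonfaces V \<Delta> e"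
    unfolding C_def using swap_mem_nonfaces[OF A(1)] u w BV(1) by blast
  moreover have "key C < key A"
    using top_C sum_swap[OF AV(3), of w u "weight F"] u w uw by (simp add: key_def C_def F_def m_def)
  moreover have "C - A = {u}"
    using u by (auto simp: C_def)
  ultimately show ?thesis
    using u by blast
qed

lemma exchange_nonfaces:
  assumes A: "A \<in> nonfaces V \<Delta> e" and B: "B \<in> nonfaces V \<Delta> e" and "A \<noteq> B" and le: "key B \<le> key A"
  shows "\<exists>C\<in>nonfaces V \<Delta> e. key C < key A \<and> (\<exists>v\<in>B. C - A = {v})"
proof -
  have AV: "A \<subseteq> V" "finite A" and BV: "B \<subseteq> V" "finite B"
    using A B finite_V finite_subset by (auto simp: nonfaces_def)
  have "card A = card B"
    using A B by (simp add: nonfaces_def)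
  then have ne: "A \<noteq> {}" "B \<noteq> {}"
    using \<open>A \<noteq> B\<close> AV(2) BV(2) by auto
  have "rank (top_vertex A) \<le> rank (top_vertex B)"
    using le by (auto simp: key_def)
  then consider "rank (top_vertex A) < rank (top_vertex B)" | "top_vertex B = top_vertex A"
    using inj_onD[OF inj_rank] top_vertex(1) AV(1) BV(1) ne by (metis le_neq_implies_less subsetD)
  then show ?thesis
  proof cases
    case 1
    then show ?thesis
      using exchange_raising_top_vertex A B ne by blast
  next
    case 2
    then show ?thesis
      using exchange_same_top_vertex[OF A ne(1) B ne(2) \<open>A \<noteq> B\<close>] le by (simp add: key_def)
  qed
qed

lemma linear_quotient_order_nonfaces: "\<exists>As. distinct As \<and> set As = nonfaces V \<Delta> e \<and> linear_quotient_order As"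
proof (rule linear_quotient_order_sort_key)
  have "nonfaces V \<Delta> e \<subseteq> Pow V"
    by (auto simp: nonfaces_def)
  then show "finite (nonfaces V \<Delta> e)"
    using finite_V finite_subset by blast
qed (rule exchange_nonfaces)

end

section \<open>Quasi-trees\<close>

lemma facets_generated_complex:
  assumes antichain: "\<forall>F\<in>S. \<forall>G\<in>S. F \<subseteq> G \<longrightarrow> F = G"
  shows "facets (generated_complex S) = S"
proof (intro equalityI subsetI)
  fix F assume F: "F \<in> facets (generated_complex S)"
  then obtain G where G: "G \<in> S" "F \<subseteq> G"
    by (auto simp: facets_def generated_complex_def)
  then have "G \<in> generated_complex S"
    by (auto simp: generated_complex_def)
  then have "G = F"
    using F G(2) by (simp add: facets_def)
  then show "F \<in> S"
    using G(1) by simp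
next
  fix F assume F: "F \<in> S"
  have "G = F" if G: "G \<in> generated_complex S" "F \<subseteq> G" for G
  proof -
    obtain H where "H \<in> S" "G \<subseteq> H"
      using G(1) by (auto simp: generated_complex_def)
    then show ?thesis
      using antichain F G(2) by (metis subset_antisym subset_trans)
  qed
  moreover have "F \<in> generated_complex S"
    using F by (auto simp: generated_complex_def)
  ultimately show "F \<in> facets (generated_complex S)"
    by (simp add: facets_def)
qed

lemma face_subset_facet:
  assumes "finite \<Delta>" "C \<in> \<Delta>"
  shows "\<exists>F\<in>facets \<Delta>. C \<subseteq> F"
proof -
  obtain F where "F \<in> \<Delta>" "C \<subseteq> F" "\<forall>G\<in>\<Delta>. F \<subseteq> G \<longrightarrow> F = G"
    using finite_has_maximal2[OF assms] by blast
  then show ?thesis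
    unfolding facets_def by blast
qed

lemma leaf_order_prefix_intersections:
  assumes "distinct Fs" and antichain: "\<forall>F\<in>set Fs. \<forall>G\<in>set Fs. F \<subseteq> G \<longrightarrow> F = G"
    and leaf: "is_leaf (generated_complex (set (take (Suc j) Fs))) (Fs ! j)"
    and j: "0 < j" "j < length Fs"
  obtains k where "k < j" and "\<And>i. i < j \<Longrightarrow> Fs ! i \<inter> Fs ! j \<subseteq> Fs ! k"
proof -
  define S where "S = set (take (Suc j) Fs)"
  have S: "S = (\<lambda>i. Fs ! i) ` {..j}"
    using nth_image[of "Suc j" Fs] j by (simp add: S_def atLeast0LessThan lessThan_Suc_atMost)
  have distinct_j: "Fs ! i \<noteq> Fs ! j" if "i < j" for i
    using nth_eq_iff_index_eq[OF assms(1), of i j] j that by simp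
  have "S \<subseteq> set Fs"
    unfolding S_def by (rule set_take_subset)
  then have facets_S: "facets (generated_complex S) = S"
    using antichain by (intro facets_generated_complex) blast
  have "Fs ! 0 \<in> S"
    using S by blast
  then have "S \<noteq> {Fs ! j}"
    using distinct_j[OF j(1)] by blast
  moreover have "is_leaf (generated_complex S) (Fs ! j)"
    using leaf by (simp add: S_def)
  then have "S = {Fs ! j} \<or> (\<exists>G\<in>S. G \<noteq> Fs ! j \<and> (\<forall>H\<in>S. H \<noteq> Fs ! j \<longrightarrow> H \<inter> Fs ! j \<subseteq> G \<inter> Fs ! j))"
    unfolding is_leaf_def facets_S by (rule conjunct2)
  ultimately obtain G where G: "G \<in> S" "G \<noteq> Fs ! j" "\<forall>H\<in>S. H \<noteq> Fs ! j \<longrightarrow> H \<inter> Fs ! j \<subseteq> G \<inter> Fs ! j"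
    by blast
  obtain k where k: "k \<le> j" "G = Fs ! k"
    using G(1) S by blast
  have "k < j"
    using k G(2) le_neq_implies_less by blast
  moreover have "Fs ! i \<inter> Fs ! j \<subseteq> Fs ! k" if "i < j" for i
  proof -
    have "Fs ! i \<in> S"
      using S that by simp
    then show ?thesis
      using G(3) distinct_j[OF that] k(2) by blast
  qed
  ultimately show ?thesis
    using that by blast
qed

definition first_facet_index :: "'a set list \<Rightarrow> 'a \<Rightarrow> nat" where
  "first_facet_index Fs x = (LEAST i. i < length Fs \<and> x \<in> Fs ! i)"

lemma first_facet_index:
  assumes "j < length Fs" "x \<in> Fs ! j"
  shows "first_facet_index Fs x \<le> j" and "x \<in> Fs ! first_facet_index Fs x"
  using assms Least_le[of "\<lambda>i. i < length Fs \<and> x \<in> Fs ! i" j] LeastI[of "\<lambda>i. i < length Fs \<and> x \<in> Fs ! i" j]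
  by (simp_all add: first_facet_index_def)

lemma leaf_order_face_subset_first_facet:
  assumes "distinct Fs" and antichain: "\<forall>F\<in>set Fs. \<forall>G\<in>set Fs. F \<subseteq> G \<longrightarrow> F = G"
    and leaf: "\<And>i. i < length Fs \<Longrightarrow> is_leaf (generated_complex (set (take (Suc i) Fs))) (Fs ! i)"
    and "j < length Fs" "C \<subseteq> Fs ! j" "u \<in> C"
    and earlier: "\<forall>x\<in>C. first_facet_index Fs x \<le> first_facet_index Fs u"
  shows "C \<subseteq> Fs ! first_facet_index Fs u"
  using assms(4,5)
proof (induction j rule: less_induct)
  case (less j)
  let ?first = "first_facet_index Fs"
  have "u \<in> Fs ! j"
    using less.prems(2) \<open>u \<in> C\<close> by blast
  then have first_u: "?first u \<le> j"
    by (rule first_facet_index(1)[OF less.prems(1)])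
  show ?case
  proof (cases "?first u = j")
    case True
    then show ?thesis
      using less.prems(2) by simp
  next
    case False
    then have "0 < j"
      using first_u by simp
    then obtain k where k: "k < j" and meet: "\<And>i. i < j \<Longrightarrow> Fs ! i \<inter> Fs ! j \<subseteq> Fs ! k"
      using leaf_order_prefix_intersections[OF assms(1) antichain leaf[OF less.prems(1)] _ less.prems(1)]
      by blast
    have "C \<subseteq> Fs ! k"
    proof
      fix x assume "x \<in> C"
      then have "x \<in> Fs ! j" "?first x < j"
        using less.prems(2) earlier first_u False by auto
      then show "x \<in> Fs ! k"
        using meet first_facet_index(2)[OF less.prems(1)] by blast
    qed
    moreover have "k < length Fs"
      using k less.prems(1) by simp
    ultimately show ?thesis
      using less.IH[OF k] by blast
  qed
qed

lemma quasi_tree_leaf_order: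
  assumes "quasi_tree n \<Delta>"
  obtains Fs where "distinct Fs" and "\<forall>F\<in>set Fs. \<forall>G\<in>set Fs. F \<subseteq> G \<longrightarrow> F = G"
    and "\<And>i. i < length Fs \<Longrightarrow> is_leaf (generated_complex (set (take (Suc i) Fs))) (Fs ! i)"
    and "set Fs \<subseteq> \<Delta>" and "\<And>C. C \<in> \<Delta> \<Longrightarrow> \<exists>j<length Fs. C \<subseteq> Fs ! j"
proof -
  obtain Fs where Fs: "distinct Fs" "set Fs = facets \<Delta>"
    and leaf: "\<And>i. i < length Fs \<Longrightarrow> is_leaf (generated_complex (set (take (Suc i) Fs))) (Fs ! i)"
    using assms by (auto simp: quasi_tree_def)
  have "finite \<Delta>"
    using assms finite_subset[of \<Delta> "Pow {1..n}"] by (auto simp: quasi_tree_def simplicial_complex_def)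
  then have in_Fs: "\<exists>j<length Fs. C \<subseteq> Fs ! j" if "C \<in> \<Delta>" for C
    using face_subset_facet[OF _ that] Fs(2) by (metis in_set_conv_nth)
  have antichain: "\<forall>F\<in>set Fs. \<forall>G\<in>set Fs. F \<subseteq> G \<longrightarrow> F = G" and faces: "set Fs \<subseteq> \<Delta>"
    using Fs(2) by (auto simp: facets_def)
  show ?thesis
    by (rule that[OF Fs(1) antichain leaf faces in_Fs])
qed

lemma quasi_tree_ranked_complex:
  assumes "quasi_tree n \<Delta>"
  obtains rank facet_of where "ranked_complex {1..n} \<Delta> rank facet_of"
proof -
  obtain Fs where Fs: "distinct Fs" "\<forall>F\<in>set Fs. \<forall>G\<in>set Fs. F \<subseteq> G \<longrightarrow> F = G"
    and leaf: "\<And>i. i < length Fs \<Longrightarrow> is_leaf (generated_complex (set (take (Suc i) Fs))) (Fs ! i)"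
    and faces: "set Fs \<subseteq> \<Delta>" and in_Fs: "\<And>C. C \<in> \<Delta> \<Longrightarrow> \<exists>j<length Fs. C \<subseteq> Fs ! j"
    using quasi_tree_leaf_order[OF assms] by blast
  have \<Delta>: "\<And>i. i \<in> {1..n} \<Longrightarrow> {i} \<in> \<Delta>" "\<And>F G. F \<in> \<Delta> \<Longrightarrow> G \<subseteq> F \<Longrightarrow> G \<in> \<Delta>"
    using assms by (auto simp: quasi_tree_def simplicial_complex_def)
  define first where "first = first_facet_index Fs"
  have first: "first v < length Fs" "v \<in> Fs ! first v" if v: "v \<in> {1..n}" for v
  proof -
    obtain j where "j < length Fs" "{v} \<subseteq> Fs ! j"
      using in_Fs[OF \<Delta>(1)[OF v]] by blast
    then show "first v < length Fs" "v \<in> Fs ! first v"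
      using first_facet_index[of j Fs v] by (auto simp: first_def)
  qed
  define rank where "rank v = v + first v * Suc n" for v
  have rank_div: "rank v div Suc n = first v" and rank_mod: "rank v mod Suc n = v" if "v \<in> {1..n}" for v
    using that div_mult_self1[of "Suc n" v "first v"] mod_mult_self1[of v "first v" "Suc n"]
    by (simp_all only: rank_def) simp_all
  have "ranked_complex {1..n} \<Delta> rank (\<lambda>u. Fs ! first u)"
  proof
    show "inj_on rank {1..n}"
      using rank_mod by (metis inj_onI)
    fix u assume u: "u \<in> {1..n}"
    show "Fs ! first u \<in> \<Delta>" "u \<in> Fs ! first u"
      using first[OF u] faces nth_mem[of "first u" Fs] by auto
    fix C assume C: "C \<in> \<Delta>" "C \<subseteq> {1..n}" "u \<in> C" "\<forall>x\<in>C. rank x \<le> rank u"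
    have "\<forall>x\<in>C. first x \<le> first u"
      using C(2,4) u rank_div div_le_mono by (metis subsetD)
    moreover obtain j where "j < length Fs" "C \<subseteq> Fs ! j"
      using in_Fs[OF C(1)] by blast
    ultimately show "C \<subseteq> Fs ! first u"
      unfolding first_def using leaf_order_face_subset_first_facet[OF Fs leaf] C(3) by blast
  qed (use \<Delta>(2) in auto)
  then show ?thesis
    using that by blast
qed

theorem theorem4p1:
  fixes n d l :: nat and \<Delta> :: "nat set set"
  assumes "quasi_tree n \<Delta>"
    and "\<exists>F\<in>\<Delta>. card F = d" and "\<forall>F\<in>\<Delta>. card F \<le> d"
    and "l < d"
  shows "has_linear_quotients n
           (ideal_gen n {(monom_of_set F :: 'k::field mpoly) | F.
              F \<subseteq> {1..n} \<and> card F = l + 1 \<and> F \<notin> \<Delta>})"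
proof -
  obtain rank facet_of where "ranked_complex {1..n} \<Delta> rank facet_of"
    using quasi_tree_ranked_complex[OF assms(1)] .
  then obtain As where As: "distinct As" "set As = nonfaces {1..n} \<Delta> (l + 1)" "linear_quotient_order As"
    using ranked_complex.linear_quotient_order_nonfaces by blast
  have gens: "{(monom_of_set F :: 'k mpoly) | F. F \<subseteq> {1..n} \<and> card F = l + 1 \<and> F \<notin> \<Delta>}
      = monom_of_set ` set As"
    using As(2) by (auto simp: nonfaces_def)
  have "\<forall>A\<in>set As. A \<subseteq> {1..n} \<and> card A = l + 1"
    using As(2) by (simp add: nonfaces_def)
  then show ?thesis
    unfolding gens by (rule has_linear_quotients_if_linear_quotient_order[OF As(1) _ As(3)])
qed

end
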